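(* There is a one-pass streaming algorithm in the VAdeg model which, given $\varepsilon\in(0,1)$ and an integer $T\ge1$, and given as input stream a graph $G=(V,E)$ with $|V|=n$ together with a coloring $f:V\to[C]$ satisfying the promise $|E_M|\ge T$, outputs with high probability an estimate $\widehat m$ with $|\widehat m-|E_M||\le\varepsilon|E_M|$. With high probability it uses $\widetilde{\mathcal O}\!\left(\min\left\{|V|,\frac{|E|}{T}\right\}\right)$ space. The algorithm does not need to know $|E|$ in advance.
   Context: Graphs are simple and undirected, $|V|=n$, $|E|=m$. A coloring $f:V\to[C]$ is given. An edge $(u,v)$ is monochromatic if $f(u)=f(v)$, and $E_M$ denotes the set of monochromatic edges. VA (Vertex Arrival) streaming model: the vertices are revealed one at a time in an arbitrary order. When a vertex $v$ is revealed, its color $f(v)$ is revealed, and then all edges between $v$ and previously revealed vertices are revealed one by one. Colors of earlier vertices are not revealed again. VAdeg model: the same as the VA model, except that when a vertex $v$ is revealed the algorithm may also query its degree $d_G(v)$ in $G$ from an oracle. "With high probability" means probability at least $1-1/n^c$ for an absolute constant $c>0$. $\widetilde{\mathcal O}(\cdot)$ hides factors polynomial in $\log n$ and $1/\varepsilon$. Space is counted in words of $O(\log n)$ bits. *)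

theory Defs
  imports "HOL-Probability.Probability"
begin

definition simple_graph :: "nat \<Rightarrow> nat set set \<Rightarrow> bool" where
  "simple_graph n Es \<longleftrightarrow> (\<forall>e\<in>Es. e \<subseteq> {0..<n} \<and> card e = 2)"

definition degree :: "nat set set \<Rightarrow> nat \<Rightarrow> nat" where
  "degree Es v = card {e\<in>Es. v \<in> e}"

definition mono_edges :: "nat set set \<Rightarrow> (nat \<Rightarrow> nat) \<Rightarrow> nat set set" where
  "mono_edges Es f = {e\<in>Es. \<exists>u v. e = {u, v} \<and> f u = f v}"

text \<open>VArr v c d: vertex v arrives with colour c and (oracle) degree d.
  EArr u v: the edge between the current vertex v and an earlier vertex u.\<close>
datatype event = VArr nat nat nat | EArr nat nat

text \<open>A valid VAdeg stream for graph Es on {0..<n} with coloring f: an arbitrary vertex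
  order vs, and for each vertex an arbitrary order of its edges to earlier vertices.\<close>
definition VAdeg_stream :: "nat \<Rightarrow> nat set set \<Rightarrow> (nat \<Rightarrow> nat) \<Rightarrow> event list \<Rightarrow> bool" where
  "VAdeg_stream n Es f xs \<longleftrightarrow>
     (\<exists>vs es. distinct vs \<and> set vs = {0..<n} \<and>
        (\<forall>i<n. distinct (es i) \<and> set (es i) = {u\<in>set (take i vs). {u, vs!i} \<in> Es}) \<and>
        xs = concat (map (\<lambda>i. VArr (vs!i) (f (vs!i)) (degree Es (vs!i))
                                # map (\<lambda>u. EArr u (vs!i)) (es i)) [0..<n]))"

text \<open>Parameters given to the algorithm: (n, epsilon, T). |E| is NOT given.
  The memory state is a list of words (natural numbers); space = length of the list.\<close>
type_synonym params = "nat \<times> real \<times> nat"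

record stream_alg =
  alg_init :: "params \<Rightarrow> nat list pmf"
  alg_step :: "params \<Rightarrow> nat list \<Rightarrow> event \<Rightarrow> nat list pmf"
  alg_out  :: "params \<Rightarrow> nat list \<Rightarrow> real"

fun run :: "(params \<Rightarrow> nat list \<Rightarrow> event \<Rightarrow> nat list pmf) \<Rightarrow> params \<Rightarrow> nat list
             \<Rightarrow> event list \<Rightarrow> nat list list pmf" where
  "run st p s [] = return_pmf [s]"
| "run st p s (x # xs) = bind_pmf (st p s x) (\<lambda>s'. map_pmf (\<lambda>tr. s # tr) (run st p s' xs))"

definition exec :: "stream_alg \<Rightarrow> params \<Rightarrow> event list \<Rightarrow> nat list list pmf" where
  "exec A p xs = bind_pmf (alg_init A p) (\<lambda>s. run (alg_step A) p s xs)"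

definition trace_space :: "nat list list \<Rightarrow> nat" where
  "trace_space tr = Max (length ` set tr)"

end

theory Submission
  imports Defs
begin

text \<open>Each vertex \<open>w\<close> is kept, on arrival, with probability \<open>P\<^sub>w = min 1 (q \<cdot> deg w)\<close>, where
  \<open>q = 8 (ln n + 2) / (\<epsilon>\<^sup>2 T)\<close>; for every kept vertex the algorithm counts the monochromatic
  edges \<open>m\<^sub>w\<close> from \<open>w\<close> to later vertices and outputs \<open>\<Sum> m\<^sub>w / P\<^sub>w\<close>.  Since the coins are
  independent and \<open>\<Sum> m\<^sub>w = |E\<^sub>M|\<close>, the moment generating function of the output factors into
  \<open>\<Prod>\<^sub>w (1 - P\<^sub>w + P\<^sub>w e\<^bsup>\<lambda> m\<^sub>w / P\<^sub>w\<^esup>)\<close>; as \<open>m\<^sub>w \<le> deg w\<close>, each factor is at most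
  \<open>exp (\<lambda> m\<^sub>w + \<lambda>\<^sup>2 m\<^sub>w / q)\<close> for \<open>|\<lambda>| \<le> q\<close>, and Chernoff's bound with \<open>\<lambda> = \<plusminus>\<epsilon> q / 2\<close> gives
  deviation probability \<open>2 exp (-\<epsilon>\<^sup>2 q |E\<^sub>M| / 4) \<le> 1/n\<close>.  In the same way the number of kept
  vertices has moment generating function at most \<open>exp (2 q \<Sum> deg w) = exp (4 q |E|)\<close>, so with
  high probability at most \<open>min n (4 q |E| + ln n + 1)\<close> vertices are stored.\<close>

text \<open>A sample \<open>(w, c, d, k)\<close>: vertex \<open>w\<close> of colour \<open>c\<close> and degree \<open>d\<close> has seen \<open>k\<close> monochromatic
  edges to later vertices.  An edge event \<open>EArr u v\<close> does not carry the colour of \<open>v\<close>, so the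
  state also remembers the colour of the vertex currently arriving.\<close>
type_synonym sample = "nat \<times> nat \<times> nat \<times> nat"
type_synonym sampler_state = "nat \<times> sample list"

fun encode_samples :: "sample list \<Rightarrow> nat list" where
  "encode_samples [] = []"
| "encode_samples ((w, c, d, k) # ss) = w # c # d # k # encode_samples ss"

fun decode_samples :: "nat list \<Rightarrow> sample list" where
  "decode_samples (w # c # d # k # r) = (w, c, d, k) # decode_samples r"
| "decode_samples _ = []"

lemma decode_encode_samples [simp]: "decode_samples (encode_samples ss) = ss"
  by (induction ss) auto

lemma length_encode_samples [simp]: "length (encode_samples ss) = 4 * length ss"
  by (induction ss) auto

lemma set_encode_samples:
  "x \<in> set (encode_samples ss) \<Longrightarrow> \<exists>(w, c, d, k)\<in>set ss. x = w \<or> x = c \<or> x = d \<or> x = k"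
  by (induction ss rule: encode_samples.induct) auto

definition encode_state :: "sampler_state \<Rightarrow> nat list" where
  "encode_state a = fst a # encode_samples (snd a)"

definition decode_state :: "nat list \<Rightarrow> sampler_state" where
  "decode_state s = (hd s, decode_samples (tl s))"

lemma decode_encode_state [simp]: "decode_state (encode_state a) = a"
  by (cases a) (simp add: encode_state_def decode_state_def)

lemma length_encode_state: "length (encode_state a) = 1 + 4 * length (snd a)"
  by (simp add: encode_state_def)

definition sampling_rate :: "params \<Rightarrow> real" where
  "sampling_rate p = (case p of (n, \<epsilon>, T) \<Rightarrow> 8 * (ln (real n) + 2) / (\<epsilon>\<^sup>2 * real T))"

definition keep_prob :: "params \<Rightarrow> nat \<Rightarrow> real" where
  "keep_prob p d = min 1 (real d * sampling_rate p)"

lemma keep_prob_nonneg: "0 \<le> sampling_rate p \<Longrightarrow> 0 \<le> keep_prob p d"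
  by (simp add: keep_prob_def)

lemma keep_prob_le_1: "keep_prob p d \<le> 1"
  by (simp add: keep_prob_def)

fun sampler_step :: "params \<Rightarrow> sampler_state \<Rightarrow> event \<Rightarrow> sampler_state pmf" where
  "sampler_step p (cur, ss) (VArr w c d) =
     map_pmf (\<lambda>b. (c, if b then ss @ [(w, c, d, 0)] else ss)) (bernoulli_pmf (keep_prob p d))"
| "sampler_step p (cur, ss) (EArr u v) =
     return_pmf (cur, map (\<lambda>(w, c, d, k). if w = u \<and> c = cur then (w, c, d, Suc k) else (w, c, d, k)) ss)"

fun sampler_final :: "params \<Rightarrow> sampler_state \<Rightarrow> event list \<Rightarrow> sampler_state pmf" where
  "sampler_final p a [] = return_pmf a"
| "sampler_final p a (x # xs) = bind_pmf (sampler_step p a x) (\<lambda>a'. sampler_final p a' xs)"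

definition estimate :: "params \<Rightarrow> sample list \<Rightarrow> real" where
  "estimate p ss = (\<Sum>(w, c, d, k)\<leftarrow>ss. real k / keep_prob p d)"

definition mono_edge_counter :: stream_alg where
  "mono_edge_counter =
     \<lparr> alg_init = (\<lambda>p. return_pmf (encode_state (0, []))),
       alg_step = (\<lambda>p s x. map_pmf encode_state (sampler_step p (decode_state s) x)),
       alg_out = (\<lambda>p s. estimate p (snd (decode_state s))) \<rparr>"

lemma exec_mono_edge_counter:
  "exec mono_edge_counter p xs = run (alg_step mono_edge_counter) p (encode_state (0, [])) xs"
  by (simp add: exec_def mono_edge_counter_def bind_return_pmf)

lemma run_nonempty: "tr \<in> set_pmf (run st p s xs) \<Longrightarrow> tr \<noteq> []"
  by (induction xs arbitrary: s tr) auto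

lemma hd_run: "tr \<in> set_pmf (run st p s xs) \<Longrightarrow> hd tr = s"
  by (induction xs arbitrary: s tr) auto

lemma set_pmf_run_mono_edge_counter:
  "tr \<in> set_pmf (run (alg_step mono_edge_counter) p (encode_state a) (x # xs)) \<longleftrightarrow>
     (\<exists>a'\<in>set_pmf (sampler_step p a x). \<exists>tr'\<in>set_pmf (run (alg_step mono_edge_counter) p (encode_state a') xs).
        tr = encode_state a # tr')"
  by (auto simp: mono_edge_counter_def)

lemma map_last_run_mono_edge_counter:
  "map_pmf last (run (alg_step mono_edge_counter) p (encode_state a) xs) =
     map_pmf encode_state (sampler_final p a xs)"
proof (induction xs arbitrary: a)
  case (Cons x xs)
  have "map_pmf last (run (alg_step mono_edge_counter) p (encode_state a) (x # xs)) =
     bind_pmf (sampler_step p a x) (\<lambda>a'. map_pmf last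
       (map_pmf ((#) (encode_state a)) (run (alg_step mono_edge_counter) p (encode_state a') xs)))"
    by (simp add: mono_edge_counter_def bind_map_pmf map_bind_pmf)
  also have "\<dots> = bind_pmf (sampler_step p a x)
      (\<lambda>a'. map_pmf last (run (alg_step mono_edge_counter) p (encode_state a') xs))"
    by (intro bind_pmf_cong refl)
      (auto simp: pmf.map_comp o_def intro!: map_pmf_cong dest: run_nonempty)
  also have "\<dots> = map_pmf encode_state (sampler_final p a (x # xs))"
    by (simp add: Cons map_bind_pmf)
  finally show ?case .
qed simp

section \<open>The moment generating function of the final state\<close>

fun pending_count :: "nat \<Rightarrow> nat \<Rightarrow> nat \<Rightarrow> event list \<Rightarrow> nat" where
  "pending_count w c cur [] = 0"
| "pending_count w c cur (VArr w' c' d # xs) = pending_count w c c' xs"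
| "pending_count w c cur (EArr u v # xs) = (if u = w \<and> c = cur then 1 else 0) + pending_count w c cur xs"

definition coin_mgf :: "real \<Rightarrow> real \<Rightarrow> params \<Rightarrow> nat \<Rightarrow> nat \<Rightarrow> real" where
  "coin_mgf \<alpha> \<beta> p d m = 1 - keep_prob p d + keep_prob p d * exp (\<alpha> * real m / keep_prob p d + \<beta>)"

fun stream_mgf :: "real \<Rightarrow> real \<Rightarrow> params \<Rightarrow> event list \<Rightarrow> real" where
  "stream_mgf \<alpha> \<beta> p [] = 1"
| "stream_mgf \<alpha> \<beta> p (VArr w c d # xs) = coin_mgf \<alpha> \<beta> p d (pending_count w c c xs) * stream_mgf \<alpha> \<beta> p xs"
| "stream_mgf \<alpha> \<beta> p (EArr u v # xs) = stream_mgf \<alpha> \<beta> p xs"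

definition exp_weight :: "real \<Rightarrow> real \<Rightarrow> params \<Rightarrow> sample list \<Rightarrow> real" where
  "exp_weight \<alpha> \<beta> p ss = exp (\<Sum>(w, c, d, k)\<leftarrow>ss. \<alpha> * real k / keep_prob p d + \<beta>)"

definition final_exponent :: "real \<Rightarrow> real \<Rightarrow> params \<Rightarrow> nat \<Rightarrow> event list \<Rightarrow> sample \<Rightarrow> real" where
  "final_exponent \<alpha> \<beta> p cur xs s = (case s of (w, c, d, k) \<Rightarrow>
     \<alpha> * (real k + real (pending_count w c cur xs)) / keep_prob p d + \<beta>)"

lemma exp_weight_estimate: "exp_weight \<alpha> 0 p ss = exp (\<alpha> * estimate p ss)"
proof -
  have "(\<Sum>(w, c, d, k)\<leftarrow>ss. \<alpha> * real k / keep_prob p d + 0) = \<alpha> * estimate p ss"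
    unfolding estimate_def by (induction ss) (auto simp: algebra_simps)
  then show ?thesis by (simp add: exp_weight_def)
qed

lemma exp_weight_length: "exp_weight 0 1 p ss = exp (real (length ss))"
proof -
  have "(\<Sum>(w, c, d, k)\<leftarrow>ss. 0 * real k / keep_prob p d + 1) = real (length ss)"
    by (induction ss) auto
  then show ?thesis by (simp add: exp_weight_def)
qed

lemma coin_mgf_nonneg: "0 \<le> sampling_rate p \<Longrightarrow> 0 \<le> coin_mgf \<alpha> \<beta> p d m"
  unfolding coin_mgf_def using keep_prob_nonneg[of p d] keep_prob_le_1[of p d]
  by (intro add_nonneg_nonneg mult_nonneg_nonneg) auto

lemma stream_mgf_nonneg: "0 \<le> sampling_rate p \<Longrightarrow> 0 \<le> stream_mgf \<alpha> \<beta> p xs"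
proof (induction xs)
  case (Cons x xs)
  then show ?case by (cases x) (auto intro!: mult_nonneg_nonneg coin_mgf_nonneg)
qed auto

text \<open>The exact moment generating function: every sample already taken contributes its final
  count, every vertex still to arrive contributes an independent coin.\<close>
lemma sampler_final_mgf:
  assumes q: "0 \<le> sampling_rate p"
  shows "(\<integral>\<^sup>+ a'. ennreal (exp_weight \<alpha> \<beta> p (snd a')) \<partial>sampler_final p (cur, ss) xs)
     = ennreal (exp (\<Sum>s\<leftarrow>ss. final_exponent \<alpha> \<beta> p cur xs s) * stream_mgf \<alpha> \<beta> p xs)"
proof (induction xs arbitrary: cur ss)
  case Nil
  show ?case by (simp add: exp_weight_def final_exponent_def case_prod_unfold)
next
  case (Cons x xs)
  show ?case
  proof (cases x)
    case (VArr w c d)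
    define P where "P = keep_prob p d"
    define S where "S = (\<Sum>s\<leftarrow>ss. final_exponent \<alpha> \<beta> p c xs s)"
    define G where "G = stream_mgf \<alpha> \<beta> p xs"
    define new where "new = final_exponent \<alpha> \<beta> p c xs (w, c, d, 0)"
    have P: "0 \<le> P" "P \<le> 1" using keep_prob_nonneg[OF q] keep_prob_le_1 by (auto simp: P_def)
    have G: "0 \<le> G" using stream_mgf_nonneg[OF q] by (simp add: G_def)
    have "(\<integral>\<^sup>+ a'. ennreal (exp_weight \<alpha> \<beta> p (snd a')) \<partial>sampler_final p (cur, ss) (x # xs))
       = (\<integral>\<^sup>+ b. ennreal (exp (\<Sum>s\<leftarrow>(if b then ss @ [(w, c, d, 0)] else ss).
            final_exponent \<alpha> \<beta> p c xs s) * G) \<partial>bernoulli_pmf P)"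
      by (simp add: VArr Cons.IH P_def G_def del: nn_integral_bernoulli_pmf)
    also have "\<dots> = ennreal (exp (S + new) * G) * ennreal P + ennreal (exp S * G) * ennreal (1 - P)"
      using P by (simp add: S_def new_def)
    also have "\<dots> = ennreal (exp (S + new) * G * P + exp S * G * (1 - P))"
      using P G by (simp add: ennreal_mult ennreal_plus)
    also have "exp (S + new) * G * P + exp S * G * (1 - P) = exp S * ((1 - P + P * exp new) * G)"
      by (simp add: exp_add algebra_simps)
    also have "1 - P + P * exp new = coin_mgf \<alpha> \<beta> p d (pending_count w c c xs)"
      by (simp add: coin_mgf_def P_def new_def final_exponent_def)
    finally show ?thesis
      by (simp add: VArr S_def G_def final_exponent_def)
  next
    case (EArr u v)
    have "(\<Sum>s\<leftarrow>map (\<lambda>(w, c, d, k). if w = u \<and> c = cur then (w, c, d, Suc k) else (w, c, d, k)) ss.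
            final_exponent \<alpha> \<beta> p cur xs s)
        = (\<Sum>s\<leftarrow>ss. final_exponent \<alpha> \<beta> p cur (EArr u v # xs) s)"
      by (induction ss) (auto simp: final_exponent_def add_divide_distrib algebra_simps)
    then show ?thesis by (simp add: EArr Cons.IH)
  qed
qed

section \<open>Vertex-arrival streams\<close>

definition vertex_block ::
    "nat set set \<Rightarrow> (nat \<Rightarrow> nat) \<Rightarrow> nat list \<Rightarrow> (nat \<Rightarrow> nat list) \<Rightarrow> nat \<Rightarrow> event list" where
  "vertex_block Es f vs L i =
     VArr (vs!i) (f (vs!i)) (degree Es (vs!i)) # map (\<lambda>u. EArr u (vs!i)) (L i)"

definition later_mono_degree ::
    "(nat \<Rightarrow> nat) \<Rightarrow> nat list \<Rightarrow> (nat \<Rightarrow> nat list) \<Rightarrow> nat \<Rightarrow> nat \<Rightarrow> nat" where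
  "later_mono_degree f vs L n j =
     (\<Sum>k\<leftarrow>[j..<n]. if f (vs!j) = f (vs!k) then count_list (L k) (vs!j) else 0)"

lemma pending_count_edges_append:
  "pending_count w c cur (map (\<lambda>u. EArr u v) us @ ys) =
     (if c = cur then count_list us w else 0) + pending_count w c cur ys"
  by (induction us) auto

lemma pending_count_blocks:
  "pending_count w c cur (concat (map (vertex_block Es f vs L) js)) =
     (\<Sum>j\<leftarrow>js. if c = f (vs!j) then count_list (L j) w else 0)"
  by (induction js arbitrary: cur) (auto simp: vertex_block_def pending_count_edges_append)

lemma stream_mgf_edges_append:
  "stream_mgf \<alpha> \<beta> p (map (\<lambda>u. EArr u v) us @ ys) = stream_mgf \<alpha> \<beta> p ys"
  by (induction us) auto

lemma stream_mgf_blocks: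
  "stream_mgf \<alpha> \<beta> p (concat (map (vertex_block Es f vs L) [i..<n])) =
     (\<Prod>j\<in>{i..<n}. coin_mgf \<alpha> \<beta> p (degree Es (vs!j)) (later_mono_degree f vs L n j))"
proof (induction "n - i" arbitrary: i)
  case (Suc x)
  then have upt: "[i..<n] = i # [Suc i..<n]" by (simp add: upt_conv_Cons)
  have "pending_count (vs!i) (f (vs!i)) (f (vs!i))
      (map (\<lambda>u. EArr u (vs!i)) (L i) @ concat (map (vertex_block Es f vs L) [Suc i..<n]))
     = later_mono_degree f vs L n i"
    by (simp add: pending_count_edges_append pending_count_blocks later_mono_degree_def upt)
  moreover have "{i..<n} = insert i {Suc i..<n}" using Suc(2) by auto
  ultimately show ?case using Suc(1)[of "Suc i"] Suc(2)
    by (simp add: upt vertex_block_def stream_mgf_edges_append)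
qed simp

fun vertex_count :: "event list \<Rightarrow> nat" where
  "vertex_count [] = 0"
| "vertex_count (VArr w c d # xs) = Suc (vertex_count xs)"
| "vertex_count (EArr u v # xs) = vertex_count xs"

lemma vertex_count_edges_append: "vertex_count (map (\<lambda>u. EArr u v) us @ ys) = vertex_count ys"
  by (induction us) auto

lemma vertex_count_blocks: "vertex_count (concat (map (vertex_block Es f vs L) js)) = length js"
  by (induction js) (auto simp: vertex_block_def vertex_count_edges_append)

lemma count_list_distinct: "distinct xs \<Longrightarrow> count_list xs x = (if x \<in> set xs then 1 else 0)"
  by (induction xs) (auto simp: count_list_0_iff)

lemma nth_in_set_take_iff:
  assumes "distinct xs" "j < length xs"
  shows "xs!j \<in> set (take k xs) \<longleftrightarrow> j < k"
proof
  assume "xs!j \<in> set (take k xs)"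
  then obtain i where "i < length (take k xs)" "take k xs ! i = xs ! j" by (auto simp: in_set_conv_nth)
  with assms show "j < k" using nth_eq_iff_index_eq by fastforce
qed (use assms in \<open>auto simp: in_set_conv_nth intro!: exI[of _ j]\<close>)

lemma length_concat_le: "(\<And>i. i \<in> set js \<Longrightarrow> length (g i) \<le> b) \<Longrightarrow> length (concat (map g js)) \<le> length js * b"
  by (induction js) (auto simp: add_mono)

text \<open>The witnesses of \<open>VAdeg_stream\<close>: the arrival order \<open>vs\<close> and, for the \<open>i\<close>-th vertex,
  the list \<open>L i\<close> of its earlier neighbours in the order their edges arrive.\<close>
locale vertex_arrival =
  fixes n :: nat and Es :: "nat set set" and f :: "nat \<Rightarrow> nat"
    and vs :: "nat list" and L :: "nat \<Rightarrow> nat list"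
  assumes simple: "simple_graph n Es"
    and distinct_vs: "distinct vs" and set_vs: "set vs = {0..<n}"
    and L: "\<And>i. i < n \<Longrightarrow> distinct (L i) \<and> set (L i) = {u\<in>set (take i vs). {u, vs!i} \<in> Es}"
begin

definition stream :: "event list" where
  "stream = concat (map (vertex_block Es f vs L) [0..<n])"

definition later_mono_nbrs :: "nat \<Rightarrow> nat set" where
  "later_mono_nbrs j = {k. j < k \<and> k < n \<and> {vs!j, vs!k} \<in> Es \<and> f (vs!j) = f (vs!k)}"

definition mono_pairs :: "(nat \<times> nat) set" where
  "mono_pairs = {(j, k). j < k \<and> k < n \<and> {vs!j, vs!k} \<in> Es \<and> f (vs!j) = f (vs!k)}"

lemma length_vs: "length vs = n"
  using distinct_card[OF distinct_vs] set_vs by simp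

lemma nth_vs_eq_iff: "a < n \<Longrightarrow> b < n \<Longrightarrow> vs!a = vs!b \<longleftrightarrow> a = b"
  using nth_eq_iff_index_eq[OF distinct_vs] length_vs by auto

lemma nth_vs_less: "j < n \<Longrightarrow> vs!j < n"
  using set_vs length_vs nth_mem by fastforce

lemma edge_subset: "e \<in> Es \<Longrightarrow> e \<subseteq> {0..<n} \<and> card e = 2"
  using simple by (auto simp: simple_graph_def)

lemma finite_edges: "finite Es"
  using edge_subset by (intro finite_subset[of Es "Pow {0..<n}"]) auto

lemma count_list_L:
  "j < n \<Longrightarrow> k < n \<Longrightarrow> count_list (L k) (vs!j) = (if j < k \<and> {vs!j, vs!k} \<in> Es then 1 else 0)"
  using L[of k] nth_in_set_take_iff[OF distinct_vs, of j k] length_vs by (simp add: count_list_distinct)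

lemma later_mono_degree_eq_card: "j < n \<Longrightarrow> later_mono_degree f vs L n j = card (later_mono_nbrs j)"
proof -
  assume j: "j < n"
  have "later_mono_degree f vs L n j =
      (\<Sum>k\<in>{j..<n}. if j < k \<and> {vs!j, vs!k} \<in> Es \<and> f (vs!j) = f (vs!k) then 1 else 0)"
    unfolding later_mono_degree_def sum_set_upt_conv_sum_list_nat[symmetric] using j
    by (intro sum.cong refl) (auto simp: count_list_L)
  also have "\<dots> = card {k\<in>{j..<n}. j < k \<and> {vs!j, vs!k} \<in> Es \<and> f (vs!j) = f (vs!k)}"
    by (simp add: sum.If_cases Int_def conj_commute)
  also have "{k\<in>{j..<n}. j < k \<and> {vs!j, vs!k} \<in> Es \<and> f (vs!j) = f (vs!k)} = later_mono_nbrs j"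
    by (auto simp: later_mono_nbrs_def)
  finally show ?thesis .
qed

lemma later_mono_degree_le_degree: "j < n \<Longrightarrow> later_mono_degree f vs L n j \<le> degree Es (vs!j)"
proof -
  assume j: "j < n"
  have "inj_on (\<lambda>k. {vs!j, vs!k}) (later_mono_nbrs j)"
  proof (rule inj_onI)
    fix k k' assume "k \<in> later_mono_nbrs j" "k' \<in> later_mono_nbrs j" "{vs!j, vs!k} = {vs!j, vs!k'}"
    then have "vs!k = vs!k'" "k < n" "k' < n" "j < k" "j < k'"
      using nth_vs_eq_iff[of j] by (auto simp: later_mono_nbrs_def doubleton_eq_iff)
    then show "k = k'" using nth_vs_eq_iff by blast
  qed
  then have "card (later_mono_nbrs j) \<le> card {e\<in>Es. vs!j \<in> e}"
    using finite_edges by (intro card_inj_on_le) (auto simp: later_mono_nbrs_def)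
  then show ?thesis using later_mono_degree_eq_card[OF j] by (simp add: degree_def)
qed

text \<open>Each monochromatic edge is counted once, at its earlier endpoint.\<close>
lemma card_mono_pairs: "card mono_pairs = card (mono_edges Es f)"
proof -
  have "inj_on (\<lambda>(j, k). {vs!j, vs!k}) mono_pairs"
  proof (rule inj_onI, clarify)
    fix j k j' k' assume "(j, k) \<in> mono_pairs" "(j', k') \<in> mono_pairs" "{vs!j, vs!k} = {vs!j', vs!k'}"
    then have "j < k" "k < n" "j' < k'" "k' < n"
      "(vs!j = vs!j' \<and> vs!k = vs!k') \<or> (vs!j = vs!k' \<and> vs!k = vs!j')"
      by (auto simp: mono_pairs_def doubleton_eq_iff)
    then show "j = j' \<and> k = k'" using nth_vs_eq_iff by auto
  qed
  moreover have "(\<lambda>(j, k). {vs!j, vs!k}) ` mono_pairs = mono_edges Es f"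
  proof
    show "(\<lambda>(j, k). {vs!j, vs!k}) ` mono_pairs \<subseteq> mono_edges Es f"
      by (auto simp: mono_pairs_def mono_edges_def)
  next
    show "mono_edges Es f \<subseteq> (\<lambda>(j, k). {vs!j, vs!k}) ` mono_pairs"
    proof
      fix e assume "e \<in> mono_edges Es f"
      then obtain u v where e: "e \<in> Es" "e = {u, v}" "f u = f v" by (auto simp: mono_edges_def)
      then have "u \<noteq> v" "u \<in> set vs" "v \<in> set vs" using edge_subset[of e] set_vs by auto
      then obtain a b where ab: "a < n" "vs!a = u" "b < n" "vs!b = v" "a \<noteq> b"
        using length_vs by (auto simp: in_set_conv_nth)
      show "e \<in> (\<lambda>(j, k). {vs!j, vs!k}) ` mono_pairs"
      proof (cases "a < b")
        case True
        then have "(a, b) \<in> mono_pairs" using ab e by (auto simp: mono_pairs_def)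
        then show ?thesis using ab e by force
      next
        case False
        then have "(b, a) \<in> mono_pairs" using ab e by (auto simp: mono_pairs_def insert_commute)
        then show ?thesis using ab e by (force simp: insert_commute)
      qed
    qed
  qed
  ultimately show ?thesis using card_image by fastforce
qed

lemma sum_later_mono_degree: "(\<Sum>j<n. later_mono_degree f vs L n j) = card (mono_edges Es f)"
proof -
  have "mono_pairs = (SIGMA j:{..<n}. later_mono_nbrs j)"
    by (auto simp: mono_pairs_def later_mono_nbrs_def)
  then have "card mono_pairs = (\<Sum>j<n. card (later_mono_nbrs j))"
    by (simp add: card_SigmaI later_mono_nbrs_def)
  then show ?thesis using card_mono_pairs by (simp add: later_mono_degree_eq_card)
qed

lemma sum_degree: "(\<Sum>j<n. degree Es (vs!j)) = 2 * card Es"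
proof -
  have "(\<Sum>j<n. degree Es (vs!j)) = (\<Sum>v\<in>{0..<n}. \<Sum>e\<in>Es. if v \<in> e then 1 else 0)"
    using sum.reindex_bij_betw[OF bij_betw_nth[OF distinct_vs refl refl], of "degree Es"]
      length_vs set_vs finite_edges
    by (simp add: degree_def sum.If_cases Int_def)
  also have "\<dots> = (\<Sum>e\<in>Es. \<Sum>v\<in>{0..<n}. if v \<in> e then 1 else 0)"
    by (rule sum.swap)
  also have "\<dots> = (\<Sum>e\<in>Es. 2)"
  proof (intro sum.cong refl)
    fix e assume "e \<in> Es"
    then have "{0..<n} \<inter> e = e" "card e = 2" using edge_subset by auto
    then show "(\<Sum>v\<in>{0..<n}. if v \<in> e then 1 else 0) = (2::nat)"
      by (simp add: sum.If_cases)
  qed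
  finally show ?thesis by simp
qed

lemma card_edges_le: "card Es \<le> n * n"
proof -
  have "Es \<subseteq> (\<lambda>(a, b). {a, b}) ` ({0..<n} \<times> {0..<n})"
  proof
    fix e assume "e \<in> Es"
    then have "e \<subseteq> {0..<n}" "card e = 2" using edge_subset by auto
    then obtain a b where "e = {a, b}" by (auto simp: card_2_iff)
    with \<open>e \<subseteq> {0..<n}\<close> show "e \<in> (\<lambda>(a, b). {a, b}) ` ({0..<n} \<times> {0..<n})" by auto
  qed
  then have "card Es \<le> card ((\<lambda>(a, b). {a, b}) ` ({0..<n} \<times> {0..<n}))"
    by (intro card_mono) auto
  also have "\<dots> \<le> card ({0..<n} \<times> {0..<n})" by (rule card_image_le) simp
  finally show ?thesis by (simp add: card_cartesian_product)
qed

lemma degree_le: "degree Es v \<le> n * n"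
  using card_edges_le card_mono[OF finite_edges, of "{e\<in>Es. v \<in> e}"] by (auto simp: degree_def)

lemma length_stream: "length stream \<le> n + n * n"
proof -
  have "length stream \<le> length [0..<n] * (1 + n)"
    unfolding stream_def
  proof (rule length_concat_le)
    fix i assume "i \<in> set [0..<n]"
    then have i: "i < n" by simp
    have "length (L i) = card (set (L i))" using L[OF i] distinct_card by metis
    also have "\<dots> \<le> card (set (take i vs))" using L[OF i] by (intro card_mono) auto
    also have "\<dots> \<le> n" using card_length[of "take i vs"] length_vs by simp
    finally show "length (vertex_block Es f vs L i) \<le> 1 + n" by (simp add: vertex_block_def)
  qed
  then show ?thesis by (simp add: algebra_simps)
qed

lemma mono_edges_le_edges: "card (mono_edges Es f) \<le> card Es"
  using finite_edges by (intro card_mono) (auto simp: mono_edges_def)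

end

section \<open>Tail bounds\<close>

lemma exp_minus_le_quadratic: "0 \<le> (x::real) \<Longrightarrow> x \<le> 1 \<Longrightarrow> exp (-x) \<le> 1 - x + x\<^sup>2"
proof -
  assume x: "0 \<le> x" "x \<le> 1"
  have "exp (-x) * (1 + x) \<le> exp (-x) * exp x"
    by (intro mult_left_mono) auto
  also have "\<dots> = 1" by (simp add: exp_minus)
  also have "1 \<le> (1 - x + x\<^sup>2) * (1 + x)" using x by (simp add: power2_eq_square algebra_simps)
  finally show ?thesis using x by (simp add: mult_le_cancel_right)
qed

lemma exp_sign_le_quadratic:
  "0 \<le> (x::real) \<Longrightarrow> x \<le> 1 \<Longrightarrow> \<sigma> \<in> {1, -1} \<Longrightarrow> exp (\<sigma> * x) \<le> 1 + \<sigma> * x + x\<^sup>2"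
  using exp_bound[of x] exp_minus_le_quadratic[of x] by auto

lemma bernoulli_mgf_le:
  fixes P x \<sigma> :: real
  assumes "0 \<le> P" "0 \<le> x" "x \<le> 1" "\<sigma> \<in> {1, -1}"
  shows "1 - P + P * exp (\<sigma> * x) \<le> exp (P * (\<sigma> * x + x\<^sup>2))"
proof -
  have "1 - P + P * exp (\<sigma> * x) \<le> 1 + P * (\<sigma> * x + x\<^sup>2)"
    using exp_sign_le_quadratic[OF assms(2-4)] assms(1) mult_left_mono by (fastforce simp: algebra_simps)
  also have "\<dots> \<le> exp (P * (\<sigma> * x + x\<^sup>2))" by (rule exp_ge_add_one_self)
  finally show ?thesis .
qed

lemma coin_mgf_estimate_le:
  assumes q: "0 < sampling_rate p" and l: "0 \<le> l" "l \<le> sampling_rate p"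
    and \<sigma>: "\<sigma> \<in> {1, -1}" and "m \<le> d"
  shows "coin_mgf (\<sigma> * l) 0 p d m \<le> exp (\<sigma> * l * m + l\<^sup>2 * m / sampling_rate p)"
proof (cases "1 \<le> real d * sampling_rate p \<or> d = 0")
  case True
  then have "coin_mgf (\<sigma> * l) 0 p d m = exp (\<sigma> * l * m)"
    using \<open>m \<le> d\<close> by (auto simp: coin_mgf_def keep_prob_def)
  also have "\<dots> \<le> exp (\<sigma> * l * m + l\<^sup>2 * m / sampling_rate p)" using q by simp
  finally show ?thesis .
next
  case False
  define P where "P = keep_prob p d"
  define x where "x = l * m / P"
  have P: "P = real d * sampling_rate p" "0 < P" "d \<noteq> 0"
    using False q by (auto simp: P_def keep_prob_def)
  have x0: "0 \<le> x" using l P by (simp add: x_def)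
  have "x \<le> l * d / P" unfolding x_def using l P \<open>m \<le> d\<close> by (intro divide_right_mono mult_left_mono) auto
  also have "\<dots> = l / sampling_rate p" using P by (simp add: field_simps)
  finally have xq: "x \<le> l / sampling_rate p" .
  also have "\<dots> \<le> 1" using l q by simp
  finally have x1: "x \<le> 1" .
  have "coin_mgf (\<sigma> * l) 0 p d m = 1 - P + P * exp (\<sigma> * x)"
    unfolding coin_mgf_def P_def[symmetric] x_def by (simp add: mult.assoc)
  also have "\<dots> \<le> exp (P * (\<sigma> * x + x\<^sup>2))"
    using bernoulli_mgf_le[OF _ x0 x1 \<sigma>] P by simp
  also have "P * (\<sigma> * x + x\<^sup>2) = \<sigma> * l * m + l * m * x"
    using P q by (simp add: x_def power2_eq_square field_simps)
  also have "l * m * x \<le> l * m * (l / sampling_rate p)"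
    using xq l by (intro mult_left_mono) auto
  finally show ?thesis by (simp add: power2_eq_square mult_ac)
qed

lemma coin_mgf_count_le:
  assumes q: "0 \<le> sampling_rate p"
  shows "coin_mgf 0 1 p d m \<le> exp (2 * real d * sampling_rate p)"
proof -
  define P where "P = keep_prob p d"
  have P: "0 \<le> P" "P \<le> real d * sampling_rate p" using q by (auto simp: P_def keep_prob_def)
  have "exp (1::real) \<le> 3" using exp_bound[of 1] by simp
  then have "coin_mgf 0 1 p d m \<le> 1 + P * 2"
    using P by (simp add: coin_mgf_def P_def[symmetric] algebra_simps mult_left_mono)
  also have "\<dots> \<le> exp (P * 2)" by (rule exp_ge_add_one_self)
  also have "\<dots> \<le> exp (2 * real d * sampling_rate p)" using P by simp
  finally show ?thesis .
qed

lemma pmf_Chernoff_bound: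
  fixes D :: "'a pmf"
  assumes "s > 0" "0 \<le> B" and mgf: "(\<integral>\<^sup>+x. ennreal (exp (s * g x)) \<partial>D) \<le> ennreal B"
  shows "measure_pmf.prob D {x. g x \<ge> a} \<le> exp (-s * a) * B"
proof -
  have "emeasure (measure_pmf D) {x. g x \<ge> a}
      \<le> ennreal (exp (-s * a)) * (\<integral>\<^sup>+x. ennreal (exp (s * g x)) \<partial>D)"
    using Chernoff_ineq_nn_integral_ge[OF \<open>s > 0\<close>, of UNIV "measure_pmf D" g a] by simp
  also have "\<dots> \<le> ennreal (exp (-s * a)) * ennreal B"
    using mgf by (rule mult_left_mono) simp
  finally show ?thesis
    using \<open>0 \<le> B\<close> by (simp add: measure_pmf.emeasure_eq_measure ennreal_mult[symmetric])
qed

lemma pmf_prob_ge_if_compl_le: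
  "measure_pmf.prob D (UNIV - A) \<le> b \<Longrightarrow> measure_pmf.prob D A \<ge> 1 - b"
  using measure_pmf.prob_compl[of A D] by simp

locale mono_edge_instance = vertex_arrival +
  fixes \<epsilon> :: real and T :: nat
  assumes eps: "0 < \<epsilon>" "\<epsilon> < 1" and T_pos: "1 \<le> T" and T_le_mono: "T \<le> card (mono_edges Es f)"
begin

abbreviation "p \<equiv> (n, \<epsilon>, T)"
abbreviation "q \<equiv> sampling_rate p"
abbreviation "M \<equiv> card (mono_edges Es f)"
abbreviation "final \<equiv> sampler_final p (0, []) stream"

lemma n_pos: "1 \<le> n"
  using sum_later_mono_degree T_le_mono T_pos by (cases n) auto

lemma rate_pos: "0 < q"
  using n_pos eps T_pos by (simp add: sampling_rate_def add_nonneg_pos)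

lemma rate_eq: "\<epsilon>\<^sup>2 * q * T = 8 * (ln (real n) + 2)"
  using eps T_pos by (simp add: sampling_rate_def)

lemma final_mgf:
  "(\<integral>\<^sup>+ a. ennreal (exp_weight \<alpha> \<beta> p (snd a)) \<partial>final) =
     ennreal (\<Prod>j<n. coin_mgf \<alpha> \<beta> p (degree Es (vs!j)) (later_mono_degree f vs L n j))"
  using sampler_final_mgf[where p=p and \<alpha>=\<alpha> and \<beta>=\<beta> and cur=0 and ss="[]" and xs=stream] rate_pos
    stream_mgf_blocks[where \<alpha>=\<alpha> and \<beta>=\<beta> and p=p and i=0 and n=n]
  by (simp add: stream_def atLeast0LessThan)

lemma estimate_tail:
  assumes \<sigma>: "\<sigma> \<in> {1, -1}"
  shows "measure_pmf.prob final {a. \<sigma> * estimate p (snd a) \<ge> \<sigma> * M + \<epsilon> * M}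
     \<le> exp (- (\<epsilon>\<^sup>2 * q * M / 4))"
proof -
  define l where "l = \<epsilon> * q / 2"
  have l: "0 < l" "l \<le> q" using eps rate_pos by (simp_all add: l_def)
  let ?m = "later_mono_degree f vs L n"
  have "(\<Prod>j<n. coin_mgf (\<sigma> * l) 0 p (degree Es (vs!j)) (?m j))
      \<le> (\<Prod>j<n. exp (\<sigma> * l * ?m j + l\<^sup>2 * ?m j / q))"
    using coin_mgf_estimate_le[OF rate_pos _ l(2) \<sigma>] l(1) later_mono_degree_le_degree
      coin_mgf_nonneg rate_pos
    by (intro prod_mono) (auto simp: less_imp_le)
  also have "\<dots> = exp (\<Sum>j<n. \<sigma> * l * ?m j + l\<^sup>2 * ?m j / q)"
    by (simp add: exp_sum)
  also have "(\<Sum>j<n. \<sigma> * l * ?m j + l\<^sup>2 * ?m j / q) =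
      \<sigma> * l * (\<Sum>j<n. real (?m j)) + l\<^sup>2 * (\<Sum>j<n. real (?m j)) / q"
    by (simp add: sum.distrib sum_distrib_left sum_divide_distrib)
  also have "(\<Sum>j<n. real (?m j)) = M"
    using sum_later_mono_degree by (metis of_nat_sum)
  finally have "(\<integral>\<^sup>+a. ennreal (exp (l * (\<sigma> * estimate p (snd a)))) \<partial>final)
      \<le> ennreal (exp (\<sigma> * l * M + l\<^sup>2 * M / q))"
    using final_mgf[of "\<sigma> * l" 0] by (simp add: exp_weight_estimate ennreal_leI mult_ac)
  then have "measure_pmf.prob final {a. \<sigma> * estimate p (snd a) \<ge> \<sigma> * M + \<epsilon> * M}
      \<le> exp (- l * (\<sigma> * M + \<epsilon> * M)) * exp (\<sigma> * l * M + l\<^sup>2 * M / q)"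
    using l by (intro pmf_Chernoff_bound) auto
  also have "\<dots> = exp (- (\<epsilon>\<^sup>2 * q * M / 4))"
    using rate_pos by (simp add: l_def power2_eq_square field_simps flip: exp_add)
  finally show ?thesis .
qed

lemma sample_count_tail:
  "measure_pmf.prob final {a. real (length (snd a)) \<ge> t} \<le> exp (- t + 4 * q * card Es)"
proof -
  have "(\<Prod>j<n. coin_mgf 0 1 p (degree Es (vs!j)) (later_mono_degree f vs L n j))
      \<le> (\<Prod>j<n. exp (2 * real (degree Es (vs!j)) * q))"
    using coin_mgf_count_le coin_mgf_nonneg rate_pos by (intro prod_mono) (auto simp: less_imp_le)
  also have "\<dots> = exp (2 * q * (\<Sum>j<n. real (degree Es (vs!j))))"
    by (simp add: exp_sum sum_distrib_left algebra_simps)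
  also have "(\<Sum>j<n. real (degree Es (vs!j))) = 2 * real (card Es)"
    using sum_degree by (metis of_nat_sum of_nat_mult of_nat_numeral)
  finally have "(\<integral>\<^sup>+a. ennreal (exp (1 * real (length (snd a)))) \<partial>final) \<le> ennreal (exp (4 * q * card Es))"
    using final_mgf[of 0 1] by (simp add: exp_weight_length ennreal_leI mult.assoc)
  then have "measure_pmf.prob final {a. real (length (snd a)) \<ge> t}
      \<le> exp (-1 * t) * exp (4 * q * card Es)"
    by (intro pmf_Chernoff_bound) auto
  then show ?thesis by (simp add: mult_exp_exp)
qed

lemma exp_minus_log_bound: "exp (- (2 * (ln (real n) + 2))) \<le> 1 / (2 * real n)"
proof -
  have n: "0 < real n" using n_pos by simp
  have "exp (- (2 * (ln (real n) + 2))) = exp (-4) * (1 / (exp (ln (real n)) * exp (ln (real n))))"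
    by (simp add: exp_diff exp_add[symmetric] exp_minus field_simps)
  also have "\<dots> = exp (-4) * (1 / (real n * real n))" using n by simp
  also have "\<dots> \<le> (1/2) * (1 / real n)"
  proof (intro mult_mono)
    have "exp (4::real) \<ge> 1 + 4" by (rule exp_ge_add_one_self)
    then show "exp (-4::real) \<le> 1/2" by (simp add: exp_minus field_simps)
    show "1 / (real n * real n) \<le> 1 / real n" using n_pos n by (simp add: field_simps)
  qed auto
  finally show ?thesis by simp
qed

lemma estimate_accurate:
  "measure_pmf.prob final {a. \<bar>estimate p (snd a) - M\<bar> \<le> \<epsilon> * M} \<ge> 1 - 1 / real n"
proof -
  have tail: "measure_pmf.prob final {a. \<sigma> * estimate p (snd a) \<ge> \<sigma> * M + \<epsilon> * M} \<le> 1 / (2 * real n)"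
    if \<sigma>: "\<sigma> \<in> {1, -1}" for \<sigma>
  proof -
    have "exp (- (\<epsilon>\<^sup>2 * q * M / 4)) \<le> exp (- (\<epsilon>\<^sup>2 * q * T / 4))"
      using T_le_mono eps rate_pos by (simp add: mult_left_mono)
    also have "\<epsilon>\<^sup>2 * q * T / 4 = 2 * (ln (real n) + 2)" using rate_eq by simp
    finally show ?thesis using estimate_tail[OF \<sigma>] exp_minus_log_bound by linarith
  qed
  have "UNIV - {a. \<bar>estimate p (snd a) - M\<bar> \<le> \<epsilon> * M} \<subseteq>
      {a. 1 * estimate p (snd a) \<ge> 1 * M + \<epsilon> * M} \<union> {a. (-1) * estimate p (snd a) \<ge> (-1) * M + \<epsilon> * M}"
    by auto
  then have "measure_pmf.prob final (UNIV - {a. \<bar>estimate p (snd a) - M\<bar> \<le> \<epsilon> * M})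
     \<le> measure_pmf.prob final ({a. 1 * estimate p (snd a) \<ge> 1 * M + \<epsilon> * M}
          \<union> {a. (-1) * estimate p (snd a) \<ge> (-1) * M + \<epsilon> * M})"
    by (intro measure_pmf.finite_measure_mono) auto
  also have "\<dots> \<le> measure_pmf.prob final {a. 1 * estimate p (snd a) \<ge> 1 * M + \<epsilon> * M}
       + measure_pmf.prob final {a. (-1) * estimate p (snd a) \<ge> (-1) * M + \<epsilon> * M}"
    by (intro measure_Un_le) auto
  also have "\<dots> \<le> 1 / real n"
    using tail[of 1] tail[of "-1"] by simp
  finally show ?thesis by (rule pmf_prob_ge_if_compl_le)
qed

definition sample_threshold :: real where
  "sample_threshold = 4 * q * card Es + ln (real n) + 1"

lemma few_samples:
  "measure_pmf.prob final {a. real (length (snd a)) < sample_threshold} \<ge> 1 - 1 / real n"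
proof -
  have n: "0 < real n" using n_pos by simp
  have "exp (- sample_threshold + 4 * q * card Es) = exp (-1) * (1 / real n)"
    using n by (simp add: sample_threshold_def exp_diff exp_add exp_minus field_simps)
  also have "\<dots> \<le> 1 / real n" using n by (simp add: divide_right_mono)
  finally have "measure_pmf.prob final (UNIV - {a. real (length (snd a)) < sample_threshold}) \<le> 1 / real n"
    using sample_count_tail[of sample_threshold] by (simp add: set_diff_eq not_less)
  then show ?thesis by (rule pmf_prob_ge_if_compl_le)
qed

end

lemma prob_last_run_mono_edge_counter:
  "measure_pmf.prob (run (alg_step mono_edge_counter) p (encode_state a) xs) {tr. P (last tr)} =
     measure_pmf.prob (sampler_final p a xs) {a'. P (encode_state a')}"
proof -
  have "measure_pmf.prob (run (alg_step mono_edge_counter) p (encode_state a) xs) {tr. P (last tr)} =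
      measure_pmf.prob (map_pmf last (run (alg_step mono_edge_counter) p (encode_state a) xs)) {s. P s}"
    by (simp add: vimage_def)
  also have "\<dots> = measure_pmf.prob (map_pmf encode_state (sampler_final p a xs)) {s. P s}"
    by (simp only: map_last_run_mono_edge_counter)
  finally show ?thesis by (simp add: vimage_def)
qed

lemma length_sampler_step_mono: "a' \<in> set_pmf (sampler_step p a x) \<Longrightarrow> length (snd a) \<le> length (snd a')"
  by (cases a; cases x) auto

lemma length_sampler_final_le:
  "a' \<in> set_pmf (sampler_final p a xs) \<Longrightarrow> length (snd a') \<le> length (snd a) + vertex_count xs"
proof (induction xs arbitrary: a)
  case (Cons x xs)
  obtain cur ss where a: "a = (cur, ss)" by (cases a)
  show ?case
  proof (cases x)
    case (VArr w c d)
    with Cons.prems a obtain b where "a' \<in> set_pmf (sampler_final p (c, if b then ss @ [(w, c, d, 0)] else ss) xs)"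
      by auto
    from Cons.IH[OF this] show ?thesis by (simp add: VArr a split: if_splits)
  next
    case (EArr u v)
    with Cons.prems a Cons.IH show ?thesis by fastforce
  qed
qed simp

text \<open>Samples are never discarded, so the space of a trace is attained at its last state.\<close>
lemma trace_space_run_mono_edge_counter:
  assumes "tr \<in> set_pmf (run (alg_step mono_edge_counter) p (encode_state a) xs)"
  shows "trace_space tr = length (last tr)"
proof -
  have "\<forall>s\<in>set tr. length s \<le> length (last tr)"
    using assms
  proof (induction xs arbitrary: a tr)
    case (Cons x xs)
    then obtain a' tr' where a': "a' \<in> set_pmf (sampler_step p a x)"
      and tr': "tr' \<in> set_pmf (run (alg_step mono_edge_counter) p (encode_state a') xs)"
      and tr: "tr = encode_state a # tr'"
      using set_pmf_run_mono_edge_counter by blast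
    have "tr' \<noteq> []" "encode_state a' \<in> set tr'"
      using run_nonempty[OF tr'] hd_run[OF tr'] by (metis list.set_sel(1))+
    moreover have "length (encode_state a) \<le> length (encode_state a')"
      using length_sampler_step_mono[OF a'] by (simp add: length_encode_state)
    ultimately show ?case using Cons.IH[OF tr'] tr by force
  qed simp
  then show ?thesis
    unfolding trace_space_def using run_nonempty[OF assms] by (intro Max_eqI) auto
qed

definition state_bounded :: "nat \<Rightarrow> nat \<Rightarrow> sampler_state \<Rightarrow> bool" where
  "state_bounded B k a \<longleftrightarrow>
     fst a < B \<and> (\<forall>w c d cnt. (w, c, d, cnt) \<in> set (snd a) \<longrightarrow> w < B \<and> c < B \<and> d < B \<and> cnt \<le> k)"

definition event_bounded :: "nat \<Rightarrow> event \<Rightarrow> bool" where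
  "event_bounded B x \<longleftrightarrow> (case x of VArr w c d \<Rightarrow> w < B \<and> c < B \<and> d < B | EArr u v \<Rightarrow> True)"

lemma encode_state_bounded: "state_bounded B k a \<Longrightarrow> k < B \<Longrightarrow> \<forall>w\<in>set (encode_state a). w < B"
  unfolding encode_state_def state_bounded_def
  by (fastforce dest: set_encode_samples)

lemma sampler_step_bounded:
  "a' \<in> set_pmf (sampler_step p a x) \<Longrightarrow> state_bounded B k a \<Longrightarrow> event_bounded B x \<Longrightarrow>
     state_bounded B (Suc k) a'"
  by (cases a; cases x) (fastforce simp: state_bounded_def event_bounded_def split: if_splits)+

text \<open>Each event raises a counter by at most one, so all words stay below \<open>B\<close> as long as
  the stream is shorter than \<open>B\<close>.\<close>
lemma run_words_bounded:
  "tr \<in> set_pmf (run (alg_step mono_edge_counter) p (encode_state a) xs) \<Longrightarrow> state_bounded B k a \<Longrightarrow>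
   \<forall>x\<in>set xs. event_bounded B x \<Longrightarrow> k + length xs < B \<Longrightarrow> \<forall>s\<in>set tr. \<forall>w\<in>set s. w < B"
proof (induction xs arbitrary: a tr k)
  case Nil
  then show ?case using encode_state_bounded by auto
next
  case (Cons x xs)
  then obtain a' tr' where a': "a' \<in> set_pmf (sampler_step p a x)"
    and tr': "tr' \<in> set_pmf (run (alg_step mono_edge_counter) p (encode_state a') xs)"
    and tr: "tr = encode_state a # tr'"
    using set_pmf_run_mono_edge_counter by blast
  have "state_bounded B (Suc k) a'" using sampler_step_bounded[OF a' Cons.prems(2)] Cons.prems(3) by simp
  then have "\<forall>s\<in>set tr'. \<forall>w\<in>set s. w < B" using Cons.IH[OF tr'] Cons.prems(3,4) by simp
  moreover have "\<forall>w\<in>set (encode_state a). w < B" using encode_state_bounded[OF Cons.prems(2)] Cons.prems(4) by simp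
  ultimately show ?case using tr by auto
qed

context mono_edge_instance
begin

abbreviation "D \<equiv> exec mono_edge_counter p stream"

lemma space_bound_arith:
  assumes N: "real N \<le> real n" "real N < sample_threshold"
  shows "real (1 + 4 * N) \<le> 140 * (ln (real n) + 2)\<^sup>2 * (1 / \<epsilon>)\<^sup>2 * min (real n) (real (card Es) / real T)"
proof -
  define Lg where "Lg = ln (real n) + 2"
  define u where "u = 1 / \<epsilon>"
  define R where "R = real (card Es) / real T"
  have Lg: "2 \<le> Lg" using n_pos by (simp add: Lg_def)
  have u2: "1 \<le> u\<^sup>2" using eps by (simp add: u_def)
  have R: "1 \<le> R" using mono_edges_le_edges T_le_mono T_pos by (simp add: R_def)
  have uR: "1 \<le> u\<^sup>2 * R" using u2 R mult_mono[of 1 "u\<^sup>2" 1 R] by simp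
  show ?thesis
  proof (cases "R \<le> real n")
    case True
    have "q * card Es = 8 * Lg * u\<^sup>2 * R"
      using eps T_pos by (simp add: sampling_rate_def Lg_def u_def R_def power2_eq_square field_simps)
    then have "real (1 + 4 * N) \<le> 128 * Lg * u\<^sup>2 * R + 4 * Lg - 3"
      using N by (simp add: sample_threshold_def Lg_def algebra_simps)
    also have "\<dots> \<le> 128 * Lg * u\<^sup>2 * R + 4 * Lg * (u\<^sup>2 * R)"
      using mult_left_mono[OF uR, of "4 * Lg"] Lg by linarith
    also have "\<dots> \<le> 140 * Lg\<^sup>2 * u\<^sup>2 * R"
      using Lg uR mult_right_mono[of Lg "Lg\<^sup>2" "u\<^sup>2 * R"] by (simp add: power2_eq_square algebra_simps)
    finally show ?thesis using True by (simp add: Lg_def u_def R_def)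
  next
    case False
    have "1 \<le> Lg\<^sup>2" using Lg by (intro one_le_power) simp
    then have "1 \<le> Lg\<^sup>2 * u\<^sup>2" using u2 mult_mono[of 1 "Lg\<^sup>2" 1 "u\<^sup>2"] by simp
    have "real (1 + 4 * N) \<le> 5 * real n" using N n_pos by simp
    also have "\<dots> \<le> 140 * (Lg\<^sup>2 * u\<^sup>2) * real n"
      using \<open>1 \<le> Lg\<^sup>2 * u\<^sup>2\<close> by (intro mult_right_mono) auto
    finally show ?thesis using False by (simp add: Lg_def u_def R_def mult_ac)
  qed
qed

lemma exec_accurate:
  "measure_pmf.prob D {tr. \<bar>alg_out mono_edge_counter p (last tr) - M\<bar> \<le> \<epsilon> * M} \<ge> 1 - 1 / real n"
proof -
  have "\<And>a. alg_out mono_edge_counter p (encode_state a) = estimate p (snd a)"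
    by (simp add: mono_edge_counter_def)
  then show ?thesis
    using estimate_accurate prob_last_run_mono_edge_counter[where
        P = "\<lambda>s. \<bar>alg_out mono_edge_counter p s - M\<bar> \<le> \<epsilon> * M"]
    by (simp add: exec_mono_edge_counter)
qed

lemma exec_space:
  "measure_pmf.prob D {tr. real (trace_space tr) \<le>
      140 * (ln (real n) + 2)\<^sup>2 * (1 / \<epsilon>)\<^sup>2 * min (real n) (real (card Es) / real T)}
    \<ge> 1 - 1 / real n"
proof -
  define B where "B = 140 * (ln (real n) + 2)\<^sup>2 * (1 / \<epsilon>)\<^sup>2 * min (real n) (real (card Es) / real T)"
  have "{a. real (length (snd a)) < sample_threshold} \<inter> set_pmf final \<subseteq> {a. real (length (encode_state a)) \<le> B}"
  proof clarify
    fix a assume "real (length (snd a)) < sample_threshold" "a \<in> set_pmf final"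
    moreover have "length (snd a) \<le> n"
      using length_sampler_final_le[OF \<open>a \<in> set_pmf final\<close>] by (simp add: stream_def vertex_count_blocks)
    ultimately show "real (length (encode_state a)) \<le> B"
      unfolding B_def length_encode_state by (intro space_bound_arith) auto
  qed
  then have "measure_pmf.prob final ({a. real (length (snd a)) < sample_threshold} \<inter> set_pmf final)
      \<le> measure_pmf.prob final {a. real (length (encode_state a)) \<le> B}"
    by (intro measure_pmf.finite_measure_mono) auto
  then have "measure_pmf.prob final {a. real (length (snd a)) < sample_threshold}
      \<le> measure_pmf.prob D {tr. real (length (last tr)) \<le> B}"
    using prob_last_run_mono_edge_counter[where P = "\<lambda>s. real (length s) \<le> B"]
    by (simp add: exec_mono_edge_counter measure_Int_set_pmf)
  also have "\<dots> = measure_pmf.prob D ({tr. real (length (last tr)) \<le> B} \<inter> set_pmf D)"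
    by (simp add: measure_Int_set_pmf)
  also have "\<dots> \<le> measure_pmf.prob D {tr. real (trace_space tr) \<le> B}"
    using trace_space_run_mono_edge_counter
    by (intro measure_pmf.finite_measure_mono) (auto simp: exec_mono_edge_counter)
  finally show ?thesis using few_samples unfolding B_def by linarith
qed

lemma exec_words:
  assumes "\<forall>v<n. f v < C"
  shows "\<forall>tr\<in>set_pmf D. \<forall>s\<in>set tr. \<forall>w\<in>set s. w < (n + C + 2)\<^sup>2"
proof (intro ballI)
  fix tr s w assume tr: "tr \<in> set_pmf D" and "s \<in> set tr" "w \<in> set s"
  define B where "B = n + n * n + C + 1"
  have "event_bounded B x" if "x \<in> set stream" for x
  proof -
    obtain i where i: "i < n" and x: "x \<in> set (vertex_block Es f vs L i)"
      using \<open>x \<in> set stream\<close> by (auto simp: stream_def)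
    have "vs!i < n" "f (vs!i) < C" "degree Es (vs!i) \<le> n * n"
      using nth_vs_less[OF i] assms degree_le by auto
    then show ?thesis using x by (auto simp: vertex_block_def event_bounded_def B_def)
  qed
  moreover have "0 + length stream < B" using length_stream by (simp add: B_def)
  moreover have "state_bounded B 0 (0, [])" by (simp add: state_bounded_def B_def)
  moreover have "tr \<in> set_pmf (run (alg_step mono_edge_counter) p (encode_state (0, [])) stream)"
    using tr by (simp add: exec_mono_edge_counter)
  ultimately have "w < B"
    using run_words_bounded \<open>s \<in> set tr\<close> \<open>w \<in> set s\<close> by blast
  also have "B \<le> (n + C + 2)\<^sup>2" by (simp add: B_def power2_eq_square algebra_simps)
  finally show "w < (n + C + 2)\<^sup>2" .
qed

end

lemma mono_edge_counter_guarantees: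
  assumes "0 < \<epsilon>" "\<epsilon> < 1" "1 \<le> T" "simple_graph n Es" "\<forall>v<n. f v < C"
    and "T \<le> card (mono_edges Es f)" and "VAdeg_stream n Es f xs"
  defines "D \<equiv> exec mono_edge_counter (n, \<epsilon>, T) xs" and "M \<equiv> real (card (mono_edges Es f))"
  shows "(\<forall>tr\<in>set_pmf D. \<forall>s\<in>set tr. \<forall>w\<in>set s. w < (n + C + 2)\<^sup>2)"
    and "measure_pmf.prob D {tr. \<bar>alg_out mono_edge_counter (n, \<epsilon>, T) (last tr) - M\<bar> \<le> \<epsilon> * M}
           \<ge> 1 - 1 / real n"
    and "measure_pmf.prob D {tr. real (trace_space tr) \<le>
           140 * (ln (real n) + 2)\<^sup>2 * (1 / \<epsilon>)\<^sup>2 * min (real n) (real (card Es) / real T)}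
           \<ge> 1 - 1 / real n"
proof -
  obtain vs L where vs: "distinct vs" "set vs = {0..<n}"
    and L: "\<forall>i<n. distinct (L i) \<and> set (L i) = {u\<in>set (take i vs). {u, vs!i} \<in> Es}"
    and xs_eq: "xs = concat (map (\<lambda>i. VArr (vs!i) (f (vs!i)) (degree Es (vs!i))
                                # map (\<lambda>u. EArr u (vs!i)) (L i)) [0..<n])"
    using \<open>VAdeg_stream n Es f xs\<close> unfolding VAdeg_stream_def by blast
  interpret mono_edge_instance n Es f vs L \<epsilon> T
    using assms vs L by unfold_locales auto
  have xs: "xs = stream" by (simp add: xs_eq stream_def vertex_block_def[abs_def])
  show "(\<forall>tr\<in>set_pmf D. \<forall>s\<in>set tr. \<forall>w\<in>set s. w < (n + C + 2)\<^sup>2)"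
    using exec_words[OF assms(5)] by (simp add: D_def xs)
  show "measure_pmf.prob D {tr. \<bar>alg_out mono_edge_counter (n, \<epsilon>, T) (last tr) - M\<bar> \<le> \<epsilon> * M}
      \<ge> 1 - 1 / real n"
    using exec_accurate by (simp add: D_def M_def xs)
  show "measure_pmf.prob D {tr. real (trace_space tr) \<le>
      140 * (ln (real n) + 2)\<^sup>2 * (1 / \<epsilon>)\<^sup>2 * min (real n) (real (card Es) / real T)}
      \<ge> 1 - 1 / real n"
    using exec_space by (simp add: D_def xs)
qed

theorem theorem3p2:
  shows "\<exists>(A::stream_alg) (K::nat) (c::real) (a::real) (b::nat). c > 0 \<and>
    (\<forall>n (\<epsilon>::real) (T::nat) (C::nat) Es f xs.
       0 < \<epsilon> \<and> \<epsilon> < 1 \<and> T \<ge> 1 \<and> simple_graph n Es \<and>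
       (\<forall>v<n. f v < C) \<and> card (mono_edges Es f) \<ge> T \<and> VAdeg_stream n Es f xs \<longrightarrow>
       (let p = (n, \<epsilon>, T); D = exec A p xs; M = real (card (mono_edges Es f)) in
         (\<forall>tr\<in>set_pmf D. \<forall>s\<in>set tr. \<forall>w\<in>set s. w < (n + C + 2) ^ K) \<and>
         measure_pmf.prob D {tr. \<bar>alg_out A p (last tr) - M\<bar> \<le> \<epsilon> * M}
            \<ge> 1 - 1 / real n powr c \<and>
         measure_pmf.prob D {tr. real (trace_space tr) \<le>
            a * (ln (real n) + 2) ^ b * (1 / \<epsilon>) ^ b * min (real n) (real (card Es) / real T)}
            \<ge> 1 - 1 / real n powr c))"
proof (rule exI[of _ mono_edge_counter], rule exI[of _ "2::nat"], rule exI[of _ "1::real"],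
    rule exI[of _ "140::real"], rule exI[of _ "2::nat"], intro conjI allI impI)
  fix n T C :: nat and \<epsilon> :: real and Es f xs
  assume "0 < \<epsilon> \<and> \<epsilon> < 1 \<and> T \<ge> 1 \<and> simple_graph n Es \<and> (\<forall>v<n. f v < C) \<and>
    card (mono_edges Es f) \<ge> T \<and> VAdeg_stream n Es f xs"
  then show "let p = (n, \<epsilon>, T); D = exec mono_edge_counter p xs; M = real (card (mono_edges Es f)) in
    (\<forall>tr\<in>set_pmf D. \<forall>s\<in>set tr. \<forall>w\<in>set s. w < (n + C + 2) ^ 2) \<and>
    measure_pmf.prob D {tr. \<bar>alg_out mono_edge_counter p (last tr) - M\<bar> \<le> \<epsilon> * M}
      \<ge> 1 - 1 / real n powr 1 \<and>
    measure_pmf.prob D {tr. real (trace_space tr) \<le>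
      140 * (ln (real n) + 2) ^ 2 * (1 / \<epsilon>) ^ 2 * min (real n) (real (card Es) / real T)}
      \<ge> 1 - 1 / real n powr 1"
    using mono_edge_counter_guarantees[of \<epsilon> T n Es f C xs] by simp
qed simp

end
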